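(* Let $p\in(0,1)$, $\gamma>0$, $B>0$, $w\in\mathbb{N}$, and for each $N\in\mathbb{N}$ let $(\xi_j^{(N)*})_{j=1}^N$ be the unique maximizer of $\mathcal{T}_N$. Then for every fixed $j\in\mathbb{N}$, the sequence $(\xi_j^{(N)*})_{N\ge j}$ is strictly decreasing in $N$; that is, $\xi_j^{(N+1)*}<\xi_j^{(N)*}$ for all $N\ge j$.
   Context: Logarithms are base 2. For an admissible (nonnegative, with sum at most $B$) sequence $(x_j)_{j\ge1}$, $$\mathcal{T}_\infty(x_1,x_2,\dots)=\sum_{k=1}^{w}p^2(1-p)^{k-1}\frac{k}{2}\log_2\!\Big(1+\gamma\frac{B}{k}\Big)+\sum_{j=1}^{\infty}p(1-p)^{j+w-1}\frac12\log_2(1+\gamma x_j)+\sum_{k=1}^{\infty}p^2(1-p)^{k+w-1}\frac{w}{2}\log_2\!\Big(1+\gamma\frac{B-\sum_{j=1}^{k}x_j}{w}\Big).$$ For $N\in\mathbb{N}$ and $\xi_1,\dots,\xi_N\ge0$ with $\sum_{j=1}^N\xi_j\le B$, define $\mathcal{T}_N(\xi_1,\dots,\xi_N)=\mathcal{T}_\infty(\xi_1,\dots,\xi_N,0,0,\dots)$. $\mathcal{T}_N$ has a unique maximizer over this compact set, denoted $(\xi_j^{(N)*})_{j=1}^N$. *)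

theory Defs
  imports Complex_Main
begin

text \<open>Sequences are functions nat => real, indexed from 1 (the value at 0 is ignored).\<close>

definition Tinf :: "real \<Rightarrow> real \<Rightarrow> real \<Rightarrow> nat \<Rightarrow> (nat \<Rightarrow> real) \<Rightarrow> real" where
  "Tinf p \<gamma> B w x =
     (\<Sum>k=1..w. p\<^sup>2 * (1 - p) ^ (k - 1) * (real k / 2) * log 2 (1 + \<gamma> * (B / real k)))
   + (\<Sum>i. (\<lambda>j. p * (1 - p) ^ (j + w - 1) * (1 / 2) * log 2 (1 + \<gamma> * x j)) (Suc i))
   + (\<Sum>i. (\<lambda>k. p\<^sup>2 * (1 - p) ^ (k + w - 1) * (real w / 2)
              * log 2 (1 + \<gamma> * ((B - (\<Sum>j=1..k. x j)) / real w))) (Suc i))"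

definition TN :: "real \<Rightarrow> real \<Rightarrow> real \<Rightarrow> nat \<Rightarrow> nat \<Rightarrow> (nat \<Rightarrow> real) \<Rightarrow> real" where
  "TN p \<gamma> B w N \<xi> = Tinf p \<gamma> B w (\<lambda>j. if 1 \<le> j \<and> j \<le> N then \<xi> j else 0)"

definition feasibleN :: "real \<Rightarrow> nat \<Rightarrow> (nat \<Rightarrow> real) \<Rightarrow> bool" where
  "feasibleN B N \<xi> \<longleftrightarrow> (\<forall>j\<in>{1..N}. 0 \<le> \<xi> j) \<and> (\<Sum>j=1..N. \<xi> j) \<le> B"

definition is_maximizerN :: "real \<Rightarrow> real \<Rightarrow> real \<Rightarrow> nat \<Rightarrow> nat \<Rightarrow> (nat \<Rightarrow> real) \<Rightarrow> bool" where
  "is_maximizerN p \<gamma> B w N \<xi> \<longleftrightarrow> feasibleN B N \<xi> \<and>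
     (\<forall>\<eta>. feasibleN B N \<eta> \<longrightarrow> TN p \<gamma> B w N \<eta> \<le> TN p \<gamma> B w N \<xi>)"

end

theory Submission
  imports Defs
begin

(*
  A maximizer of T_N is interior, so it is a stationary point. With R_j = B - (xi_1 + ... + xi_j),
  u_j = 1 / (1 + gamma xi_j) and v_j = 1 / (1 + gamma R_j / w), stationarity reads
  xi_N = R_N / w and u_j = p v_j + (1 - p) u_(j+1) for j < N. The recurrence is monotone:
  xi_j <= eta_j and R^eta_j <= R^xi_j force xi_(j+1) <= eta_(j+1), so comparisons propagate
  forward. Let xi and eta be the maximizers for N and N + 1. If eta_1 >= xi_1, the comparison
  reaches index N; reading xi_N = R^xi_N / w as one more step of the recurrence gives
  eta_(N+1) >= R^xi_N / w >= R^eta_N / w > R^eta_(N+1) / w = eta_(N+1), a contradiction.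
  Hence eta_1 < xi_1, and the strict comparison propagates to every j <= N.
*)

definition remaining :: "real \<Rightarrow> (nat \<Rightarrow> real) \<Rightarrow> nat \<Rightarrow> real" where
  "remaining B x k = B - (\<Sum>i=1..k. x i)"

(* The derivative of log 2 (1 + gamma a) in a is gamma / ln 2 * marginal gamma a. *)
definition marginal :: "real \<Rightarrow> real \<Rightarrow> real" where
  "marginal \<gamma> a = 1 / (1 + \<gamma> * a)"

lemma remaining_Suc: "remaining B x (Suc k) = remaining B x k - x (Suc k)"
  by (simp add: remaining_def)

lemma remaining_antimono:
  assumes "k \<le> n" and "\<And>i. k < i \<Longrightarrow> i \<le> n \<Longrightarrow> 0 \<le> x i"
  shows "remaining B x n \<le> remaining B x k"
proof -
  have "(\<Sum>i=1..k. x i) \<le> (\<Sum>i=1..n. x i)"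
    by (rule sum_mono2) (use assms in auto)
  then show ?thesis by (simp add: remaining_def)
qed

lemma marginal_le_iff:
  assumes "0 < \<gamma>" "0 \<le> a" "0 \<le> b"
  shows "marginal \<gamma> a \<le> marginal \<gamma> b \<longleftrightarrow> b \<le> a"
proof -
  have "0 < 1 + \<gamma> * a" "0 < 1 + \<gamma> * b" using assms by (auto intro: add_pos_nonneg)
  then have "marginal \<gamma> a \<le> marginal \<gamma> b \<longleftrightarrow> 1 + \<gamma> * b \<le> 1 + \<gamma> * a"
    by (simp add: marginal_def divide_le_cancel frac_le_eq field_simps)
  also have "\<dots> \<longleftrightarrow> b \<le> a" using assms by simp
  finally show ?thesis .
qed

lemma marginal_less_iff:
  assumes "0 < \<gamma>" "0 \<le> a" "0 \<le> b"
  shows "marginal \<gamma> a < marginal \<gamma> b \<longleftrightarrow> b < a"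
  using marginal_le_iff[OF assms] marginal_le_iff[OF assms(1,3,2)] by auto

lemma marginal_0 [simp]: "marginal \<gamma> 0 = 1"
  by (simp add: marginal_def)

lemma marginal_eq_iff:
  assumes "0 < \<gamma>" "0 \<le> a" "0 \<le> b"
  shows "marginal \<gamma> a = marginal \<gamma> b \<longleftrightarrow> a = b"
  using marginal_le_iff[OF assms] marginal_le_iff[OF assms(1,3,2)] by (metis order.antisym order.refl)

lemma suminf_Suc_eventually_geometric:
  fixes f :: "nat \<Rightarrow> real"
  assumes q: "\<bar>q\<bar> < 1" and f: "\<And>k. N < k \<Longrightarrow> f k = a * q ^ k"
  shows "(\<Sum>i. f (Suc i)) = (\<Sum>k=1..N. f k) + a * q ^ Suc N / (1 - q)"
proof -
  have "(\<lambda>n. f (Suc (n + N))) = (\<lambda>n. a * q ^ Suc N * q ^ n)"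
    using f by (simp add: power_add mult_ac)
  moreover have "(\<lambda>n. a * q ^ Suc N * q ^ n) sums (a * q ^ Suc N * (1 / (1 - q)))"
    using q by (intro sums_mult geometric_sums) simp
  ultimately have tail: "(\<lambda>n. f (Suc (n + N))) sums (a * q ^ Suc N / (1 - q))"
    by simp
  then have "summable (\<lambda>i. f (Suc i))"
    using summable_iff_shift[of "\<lambda>i. f (Suc i)" N] by (auto simp: sums_iff)
  then have "(\<Sum>i. f (Suc i)) = (\<Sum>n. f (Suc (n + N))) + (\<Sum>i<N. f (Suc i))"
    by (rule suminf_split_initial_segment)
  with tail show ?thesis
    by (simp add: sums_iff sum.atLeast1_atMost_eq)
qed

(* T_N without its allocation-independent first sum; past index N the last series of T_infinity
   is geometric, and its tail is the final term here. *)
definition TN_variable :: "real \<Rightarrow> real \<Rightarrow> real \<Rightarrow> nat \<Rightarrow> nat \<Rightarrow> (nat \<Rightarrow> real) \<Rightarrow> real" where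
  "TN_variable p \<gamma> B w N x =
     (\<Sum>j=1..N. p * (1 - p) ^ (j + w - 1) * (1 / 2) * log 2 (1 + \<gamma> * x j))
   + (\<Sum>k=1..N. p\<^sup>2 * (1 - p) ^ (k + w - 1) * (real w / 2)
                * log 2 (1 + \<gamma> * (remaining B x k / real w)))
   + p * (1 - p) ^ (N + w) * (real w / 2) * log 2 (1 + \<gamma> * (remaining B x N / real w))"

lemma TN_eq_TN_variable:
  assumes "0 < p" "p < 1"
  shows "TN p \<gamma> B w N x =
     (\<Sum>k=1..w. p\<^sup>2 * (1 - p) ^ (k - 1) * (real k / 2) * log 2 (1 + \<gamma> * (B / real k)))
     + TN_variable p \<gamma> B w N x"
proof -
  define y where "y = (\<lambda>j. if 1 \<le> j \<and> j \<le> N then x j else 0)"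
  have q: "\<bar>1 - p\<bar> < 1" using assms by simp
  have pw: "real w * (1 - p) ^ (k + w - 1) = real w * ((1 - p) ^ (w - 1) * (1 - p) ^ k)" for k
    by (cases w) (simp_all add: power_add)
  have R: "remaining B y k = remaining B x (min k N)" for k
  proof -
    have "(\<Sum>i=1..k. y i) = (\<Sum>i=1..min k N. y i)"
      by (rule sum.mono_neutral_right) (auto simp: y_def)
    also have "\<dots> = (\<Sum>i=1..min k N. x i)"
      by (rule sum.cong) (auto simp: y_def)
    finally show ?thesis by (simp add: remaining_def)
  qed
  have "(\<Sum>i. (\<lambda>j. p * (1 - p) ^ (j + w - 1) * (1 / 2) * log 2 (1 + \<gamma> * y j)) (Suc i))
      = (\<Sum>j=1..N. p * (1 - p) ^ (j + w - 1) * (1 / 2) * log 2 (1 + \<gamma> * x j))"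
    by (subst suminf_Suc_eventually_geometric[OF q, where N = N and a = 0])
       (auto simp: y_def intro: sum.cong)
  moreover have "(\<Sum>i. (\<lambda>k. p\<^sup>2 * (1 - p) ^ (k + w - 1) * (real w / 2)
              * log 2 (1 + \<gamma> * (remaining B y k / real w))) (Suc i))
      = (\<Sum>k=1..N. p\<^sup>2 * (1 - p) ^ (k + w - 1) * (real w / 2)
                * log 2 (1 + \<gamma> * (remaining B x k / real w)))
      + p * (1 - p) ^ (N + w) * (real w / 2) * log 2 (1 + \<gamma> * (remaining B x N / real w))"
    using pw[of "Suc N"] pw R assms
    by (subst suminf_Suc_eventually_geometric[OF q, where N = N and
          a = "p\<^sup>2 * (1 - p) ^ (w - 1) * (real w / 2) * log 2 (1 + \<gamma> * (remaining B x N / real w))"])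
       (auto simp: power2_eq_square mult_ac)
  ultimately show ?thesis
    unfolding TN_def Tinf_def TN_variable_def y_def[symmetric] remaining_def[symmetric]
    by simp
qed

lemma is_maximizerN_iff_TN_variable:
  assumes "0 < p" "p < 1"
  shows "is_maximizerN p \<gamma> B w N x \<longleftrightarrow> feasibleN B N x \<and>
    (\<forall>y. feasibleN B N y \<longrightarrow> TN_variable p \<gamma> B w N y \<le> TN_variable p \<gamma> B w N x)"
  unfolding is_maximizerN_def TN_eq_TN_variable[OF assms] by simp

lemma DERIV_log_affine:
  assumes "\<beta> \<noteq> 0 \<Longrightarrow> 0 < \<alpha>"
  shows "((\<lambda>t. log 2 (\<alpha> + \<beta> * t)) has_real_derivative \<beta> / (ln 2 * \<alpha>)) (at 0)"
proof (cases "\<beta> = 0")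
  case False
  with assms have "0 < \<alpha>" by simp
  then show ?thesis
    by (auto intro!: derivative_eq_intros)
qed simp

lemma DERIV_sum_log_update:
  fixes x c :: "nat \<Rightarrow> real"
  assumes "finite A" "j \<in> A" "0 < 1 + \<gamma> * x j"
  shows "((\<lambda>t. \<Sum>i\<in>A. c i * log 2 (1 + \<gamma> * (x(j := x j + t)) i)) has_real_derivative
           c j * \<gamma> / ln 2 * marginal \<gamma> (x j)) (at 0)"
proof -
  have "(\<lambda>t. \<Sum>i\<in>A. c i * log 2 (1 + \<gamma> * (x(j := x j + t)) i))
      = (\<lambda>t. (\<Sum>i\<in>A - {j}. c i * log 2 (1 + \<gamma> * x i)) + c j * log 2 ((1 + \<gamma> * x j) + \<gamma> * t))"
    using assms by (simp add: sum.remove algebra_simps)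
  moreover have "((\<lambda>t. (\<Sum>i\<in>A - {j}. c i * log 2 (1 + \<gamma> * x i)) + c j * log 2 ((1 + \<gamma> * x j) + \<gamma> * t))
      has_real_derivative 0 + c j * (\<gamma> / (ln 2 * (1 + \<gamma> * x j)))) (at 0)"
    using assms(3) by (intro DERIV_add DERIV_const DERIV_cmult DERIV_log_affine)
  ultimately show ?thesis
    by (simp add: marginal_def)
qed

lemma remaining_update:
  assumes "1 \<le> j"
  shows "remaining B (x(j := x j + t)) k = remaining B x k - (if j \<le> k then t else 0)"
proof -
  have "(\<Sum>i=1..k. (x(j := x j + t)) i) = (\<Sum>i=1..k. x i + (if i = j then t else 0))"
    by (rule sum.cong) auto
  also have "\<dots> = (\<Sum>i=1..k. x i) + (if j \<le> k then t else 0)"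
    using assms by (simp add: sum.distrib)
  finally show ?thesis by (simp add: remaining_def)
qed

lemma DERIV_log_remaining_update:
  assumes "1 \<le> j" "j \<le> k \<Longrightarrow> 0 < 1 + \<gamma> * (remaining B x k / c)"
  shows "((\<lambda>t. log 2 (1 + \<gamma> * (remaining B (x(j := x j + t)) k / c))) has_real_derivative
           (if j \<le> k then - \<gamma> / (c * ln 2) * marginal \<gamma> (remaining B x k / c) else 0)) (at 0)"
proof -
  have F: "(\<lambda>t. log 2 (1 + \<gamma> * (remaining B (x(j := x j + t)) k / c)))
      = (\<lambda>t. log 2 ((1 + \<gamma> * (remaining B x k / c)) + (if j \<le> k then - \<gamma> / c else 0) * t))"
    unfolding remaining_update[OF assms(1)] by (auto simp: diff_divide_distrib algebra_simps)
  have "((\<lambda>t. log 2 ((1 + \<gamma> * (remaining B x k / c)) + (if j \<le> k then - \<gamma> / c else 0) * t))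
      has_real_derivative (if j \<le> k then - \<gamma> / c else 0) / (ln 2 * (1 + \<gamma> * (remaining B x k / c)))) (at 0)"
    using assms(2) by (intro DERIV_log_affine) (simp split: if_splits)
  then show ?thesis
    unfolding F by (rule DERIV_cong) (simp add: marginal_def)
qed

lemma DERIV_sum_log_remaining_update:
  fixes x a :: "nat \<Rightarrow> real"
  assumes "finite A" "1 \<le> j" "\<And>k. k \<in> A \<Longrightarrow> j \<le> k \<Longrightarrow> 0 < 1 + \<gamma> * (remaining B x k / c)"
  shows "((\<lambda>t. \<Sum>k\<in>A. a k * log 2 (1 + \<gamma> * (remaining B (x(j := x j + t)) k / c))) has_real_derivative
           - \<gamma> / (c * ln 2) * (\<Sum>k\<in>{k\<in>A. j \<le> k}. a k * marginal \<gamma> (remaining B x k / c))) (at 0)"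
proof -
  have "((\<lambda>t. \<Sum>k\<in>A. a k * log 2 (1 + \<gamma> * (remaining B (x(j := x j + t)) k / c))) has_real_derivative
      (\<Sum>k\<in>A. a k * (if j \<le> k then - \<gamma> / (c * ln 2) * marginal \<gamma> (remaining B x k / c) else 0))) (at 0)"
    using assms by (intro DERIV_sum DERIV_cmult DERIV_log_remaining_update) auto
  moreover have "(\<Sum>k\<in>A. a k * (if j \<le> k then - \<gamma> / (c * ln 2) * marginal \<gamma> (remaining B x k / c) else 0))
      = (\<Sum>k\<in>A. if j \<le> k then - \<gamma> / (c * ln 2) * (a k * marginal \<gamma> (remaining B x k / c)) else 0)"
    by (intro sum.cong) auto
  also have "\<dots> = (\<Sum>k\<in>{k\<in>A. j \<le> k}. - \<gamma> / (c * ln 2) * (a k * marginal \<gamma> (remaining B x k / c)))"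
    by (rule sum.inter_filter[symmetric]) (fact assms(1))
  also have "\<dots> = - \<gamma> / (c * ln 2) * (\<Sum>k\<in>{k\<in>A. j \<le> k}. a k * marginal \<gamma> (remaining B x k / c))"
    by (rule sum_distrib_left[symmetric])
  ultimately show ?thesis
    by (rule DERIV_cong)
qed

lemma feasibleN_remaining_nonneg:
  assumes "feasibleN B N x" "k \<le> N"
  shows "0 \<le> remaining B x k"
proof -
  have "remaining B x N \<le> remaining B x k"
    using assms by (intro remaining_antimono) (auto simp: feasibleN_def)
  moreover have "0 \<le> remaining B x N"
    using assms by (simp add: feasibleN_def remaining_def)
  ultimately show ?thesis by simp
qed

lemma feasibleN_update:
  assumes "feasibleN B N x" "1 \<le> j" "j \<le> N" "0 \<le> x j + t" "t \<le> remaining B x N"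
  shows "feasibleN B N (x(j := x j + t))"
proof -
  have "0 \<le> remaining B (x(j := x j + t)) N"
    using assms(2,3,5) by (simp add: remaining_update)
  then show ?thesis
    using assms(1,4) by (auto simp: feasibleN_def remaining_def)
qed

(* The partial derivative of T_N in the j-th coordinate, up to the positive factor
   p (1 - p)^(w - 1) gamma / (2 ln 2). *)
definition grad_coord :: "real \<Rightarrow> real \<Rightarrow> real \<Rightarrow> nat \<Rightarrow> nat \<Rightarrow> (nat \<Rightarrow> real) \<Rightarrow> nat \<Rightarrow> real" where
  "grad_coord p \<gamma> B w N x j =
     (1 - p) ^ j * marginal \<gamma> (x j)
     - (\<Sum>k=j..N. p * (1 - p) ^ k * marginal \<gamma> (remaining B x k / real w))
     - (1 - p) ^ (N + 1) * marginal \<gamma> (remaining B x N / real w)"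

lemma DERIV_TN_variable_update:
  assumes j: "1 \<le> j" "j \<le> N" and w: "1 \<le> w" and \<gamma>: "0 < \<gamma>" and x: "feasibleN B N x"
  shows "((\<lambda>t. TN_variable p \<gamma> B w N (x(j := x j + t))) has_real_derivative
           p * (1 - p) ^ (w - 1) * \<gamma> / (2 * ln 2) * grad_coord p \<gamma> B w N x j) (at 0)"
proof -
  define K where "K = p * (1 - p) ^ (w - 1) * \<gamma> / (2 * ln 2)"
  define m where "m = (\<lambda>k. marginal \<gamma> (remaining B x k / real w))"
  have pw: "(1 - p) ^ (k + w - 1) = (1 - p) ^ (w - 1) * (1 - p) ^ k" for k
  proof -
    have "k + w - 1 = (w - 1) + k" using w by simp
    then show ?thesis by (simp add: power_add)
  qed
  have pos: "0 < 1 + \<gamma> * (remaining B x k / real w)" if "j \<le> k" "k \<le> N" for k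
    using feasibleN_remaining_nonneg[OF x that(2)] \<gamma> w by (simp add: add_pos_nonneg)
  have d1: "((\<lambda>t. \<Sum>i=1..N. p * (1 - p) ^ (i + w - 1) * (1 / 2) * log 2 (1 + \<gamma> * (x(j := x j + t)) i))
      has_real_derivative K * ((1 - p) ^ j * marginal \<gamma> (x j))) (at 0)"
  proof -
    have "0 < 1 + \<gamma> * x j" using \<gamma> x j by (simp add: feasibleN_def add_pos_nonneg)
    with j have "((\<lambda>t. \<Sum>i=1..N. p * (1 - p) ^ (i + w - 1) * (1 / 2) * log 2 (1 + \<gamma> * (x(j := x j + t)) i))
      has_real_derivative p * (1 - p) ^ (j + w - 1) * (1 / 2) * \<gamma> / ln 2 * marginal \<gamma> (x j)) (at 0)"
      by (intro DERIV_sum_log_update) auto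
    then show ?thesis
      by (rule DERIV_cong) (unfold pw K_def, simp)
  qed
  have d2: "((\<lambda>t. \<Sum>k=1..N. p\<^sup>2 * (1 - p) ^ (k + w - 1) * (real w / 2)
                * log 2 (1 + \<gamma> * (remaining B (x(j := x j + t)) k / real w)))
      has_real_derivative - K * (\<Sum>k=j..N. p * (1 - p) ^ k * m k)) (at 0)"
  proof -
    have S: "{k\<in>{1..N}. j \<le> k} = {j..N}"
      using j by auto
    have "((\<lambda>t. \<Sum>k=1..N. p\<^sup>2 * (1 - p) ^ (k + w - 1) * (real w / 2)
                * log 2 (1 + \<gamma> * (remaining B (x(j := x j + t)) k / real w)))
      has_real_derivative - \<gamma> / (real w * ln 2)
        * (\<Sum>k\<in>{k\<in>{1..N}. j \<le> k}. p\<^sup>2 * (1 - p) ^ (k + w - 1) * (real w / 2) * m k)) (at 0)"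
      unfolding m_def using j pos by (intro DERIV_sum_log_remaining_update) auto
    then show ?thesis
      unfolding S by (rule DERIV_cong)
        (unfold pw K_def, use w in \<open>simp add: sum_distrib_left sum_divide_distrib sum_negf
          power2_eq_square mult_ac\<close>)
  qed
  have d3: "((\<lambda>t. p * (1 - p) ^ (N + w) * (real w / 2)
                * log 2 (1 + \<gamma> * (remaining B (x(j := x j + t)) N / real w)))
      has_real_derivative - K * ((1 - p) ^ (N + 1) * m N)) (at 0)"
  proof -
    have e: "(1 - p) ^ (N + w) = (1 - p) ^ (w - 1) * (1 - p) ^ (N + 1)"
      using pw[of "N + 1"] by simp
    have "((\<lambda>t. p * (1 - p) ^ (N + w) * (real w / 2)
                * log 2 (1 + \<gamma> * (remaining B (x(j := x j + t)) N / real w)))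
      has_real_derivative p * (1 - p) ^ (N + w) * (real w / 2)
        * (if j \<le> N then - \<gamma> / (real w * ln 2) * m N else 0)) (at 0)"
      unfolding m_def by (intro DERIV_cmult DERIV_log_remaining_update j(1) pos) auto
    then show ?thesis
      by (rule DERIV_cong) (use w j in \<open>simp add: K_def e field_simps\<close>)
  qed
  have "((\<lambda>t. TN_variable p \<gamma> B w N (x(j := x j + t))) has_real_derivative
      K * ((1 - p) ^ j * marginal \<gamma> (x j)) + - K * (\<Sum>k=j..N. p * (1 - p) ^ k * m k)
      + - K * ((1 - p) ^ (N + 1) * m N)) (at 0)"
    unfolding TN_variable_def by (intro DERIV_add d1 d2 d3)
  then show ?thesis
    by (rule DERIV_cong) (simp add: K_def m_def grad_coord_def algebra_simps)
qed

lemma sum_geometric_weights: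
  fixes p :: real
  shows "j \<le> Suc N \<Longrightarrow> (\<Sum>k=j..N. p * (1 - p) ^ k) + (1 - p) ^ (N + 1) = (1 - p) ^ j"
proof (induction N)
  case 0
  then show ?case by (cases j) (auto simp: algebra_simps)
next
  case (Suc N)
  show ?case
  proof (cases "j = Suc (Suc N)")
    case False
    with Suc show ?thesis by (simp add: algebra_simps)
  qed simp
qed

lemma maximizer_grad_coord_nonneg:
  assumes p: "0 < p" "p < 1" and \<gamma>: "0 < \<gamma>" and w: "1 \<le> w"
    and m: "is_maximizerN p \<gamma> B w N x" and j: "1 \<le> j" "j \<le> N" and "0 < x j"
  shows "0 \<le> grad_coord p \<gamma> B w N x j"
proof (rule ccontr)
  have x: "feasibleN B N x" using m by (simp add: is_maximizerN_def)
  assume "\<not> 0 \<le> grad_coord p \<gamma> B w N x j"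
  moreover have "0 < p * (1 - p) ^ (w - 1) * \<gamma> / (2 * ln 2)"
    using p \<gamma> by simp
  ultimately have "p * (1 - p) ^ (w - 1) * \<gamma> / (2 * ln 2) * grad_coord p \<gamma> B w N x j < 0"
    by (intro mult_pos_neg) auto
  from DERIV_neg_dec_left[OF DERIV_TN_variable_update[OF j w \<gamma> x] this]
  obtain d where "0 < d"
    and d: "\<And>h. 0 < h \<Longrightarrow> h < d \<Longrightarrow>
      TN_variable p \<gamma> B w N x < TN_variable p \<gamma> B w N (x(j := x j + (0 - h)))"
    by auto
  define h where "h = min d (x j) / 2"
  have h: "0 < h" "h < d" "h \<le> x j" using \<open>0 < d\<close> \<open>0 < x j\<close> by (auto simp: h_def)
  have "feasibleN B N (x(j := x j + (0 - h)))"
    using h feasibleN_remaining_nonneg[OF x order.refl] by (intro feasibleN_update[OF x j]) auto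
  with m d[OF h(1,2)] show False
    by (auto simp: is_maximizerN_iff_TN_variable[OF p] not_le[symmetric])
qed

lemma maximizer_grad_coord_nonpos:
  assumes p: "0 < p" "p < 1" and \<gamma>: "0 < \<gamma>" and w: "1 \<le> w"
    and m: "is_maximizerN p \<gamma> B w N x" and j: "1 \<le> j" "j \<le> N" and "0 < remaining B x N"
  shows "grad_coord p \<gamma> B w N x j \<le> 0"
proof (rule ccontr)
  have x: "feasibleN B N x" using m by (simp add: is_maximizerN_def)
  assume "\<not> grad_coord p \<gamma> B w N x j \<le> 0"
  with p \<gamma> have "0 < p * (1 - p) ^ (w - 1) * \<gamma> / (2 * ln 2) * grad_coord p \<gamma> B w N x j"
    by simp
  from DERIV_pos_inc_right[OF DERIV_TN_variable_update[OF j w \<gamma> x] this]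
  obtain d where "0 < d"
    and d: "\<And>h. 0 < h \<Longrightarrow> h < d \<Longrightarrow>
      TN_variable p \<gamma> B w N x < TN_variable p \<gamma> B w N (x(j := x j + (0 + h)))"
    by auto
  define h where "h = min d (remaining B x N) / 2"
  have h: "0 < h" "h < d" "h \<le> remaining B x N"
    using \<open>0 < d\<close> \<open>0 < remaining B x N\<close> by (auto simp: h_def)
  have "feasibleN B N (x(j := x j + (0 + h)))"
    using h x j by (intro feasibleN_update[OF x j]) (auto simp: feasibleN_def)
  with m d[OF h(1,2)] show False
    by (auto simp: is_maximizerN_iff_TN_variable[OF p] not_le[symmetric])
qed

lemma grad_coord_last:
  "grad_coord p \<gamma> B w N x N
     = (1 - p) ^ N * (marginal \<gamma> (x N) - marginal \<gamma> (remaining B x N / real w))"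
  by (simp add: grad_coord_def algebra_simps)

lemma grad_coord_diff:
  assumes "j < N"
  shows "grad_coord p \<gamma> B w N x j - grad_coord p \<gamma> B w N x (Suc j)
     = (1 - p) ^ j * (marginal \<gamma> (x j) - p * marginal \<gamma> (remaining B x j / real w)
                      - (1 - p) * marginal \<gamma> (x (Suc j)))"
  using assms by (simp add: grad_coord_def sum.atLeast_Suc_atMost algebra_simps)

lemma maximizer_remaining_pos:
  assumes p: "0 < p" "p < 1" and \<gamma>: "0 < \<gamma>" and w: "1 \<le> w" and "0 < B"
    and m: "is_maximizerN p \<gamma> B w N x"
  shows "0 < remaining B x N"
proof (rule ccontr)
  have x: "feasibleN B N x" using m by (simp add: is_maximizerN_def)
  assume "\<not> 0 < remaining B x N"
  then have R0: "remaining B x N = 0"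
    using feasibleN_remaining_nonneg[OF x order.refl] by simp
  define M where "M = {i\<in>{1..N}. 0 < x i}"
  have "M \<noteq> {}"
  proof
    assume "M = {}"
    then have "(\<Sum>i=1..N. x i) = 0"
      using x by (intro sum.neutral) (force simp: M_def feasibleN_def)
    with R0 \<open>0 < B\<close> show False by (simp add: remaining_def)
  qed
  have "finite M" by (simp add: M_def)
  define i where "i = Max M"
  have "i \<in> M"
    unfolding i_def using \<open>M \<noteq> {}\<close> by (intro Max_in) (auto simp: M_def)
  then have i: "1 \<le> i" "i \<le> N" "0 < x i" by (auto simp: M_def)
  (* At the last positive coordinate i all later remainders vanish, so shrinking x i pays off. *)
  have beyond: "x l = 0" if "i < l" "l \<le> N" for l
  proof -
    have "l \<notin> M" using that Max_ge[OF \<open>finite M\<close>, of l] by (auto simp: i_def)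
    moreover have "0 \<le> x l" using x that i by (simp add: feasibleN_def)
    ultimately show ?thesis using that i by (simp add: M_def)
  qed
  have "remaining B x k = 0" if "i \<le> k" "k \<le> N" for k
  proof -
    have "(\<Sum>l=1..k. x l) = (\<Sum>l=1..N. x l)"
      by (rule sum.mono_neutral_left) (use that beyond in auto)
    with R0 show ?thesis by (simp add: remaining_def)
  qed
  then have "grad_coord p \<gamma> B w N x i
      = (1 - p) ^ i * marginal \<gamma> (x i) - ((\<Sum>k=i..N. p * (1 - p) ^ k) + (1 - p) ^ (N + 1))"
    using i by (simp add: grad_coord_def)
  also have "\<dots> = (1 - p) ^ i * (marginal \<gamma> (x i) - 1)"
    using sum_geometric_weights[of i N p] i by (simp add: algebra_simps)
  also have "\<dots> < 0"
    using p marginal_less_iff[OF \<gamma>, of "x i" 0] i by (intro mult_pos_neg) auto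
  finally show False
    using maximizer_grad_coord_nonneg[OF p \<gamma> w m i] by simp
qed

lemma maximizer_pos:
  assumes p: "0 < p" "p < 1" and \<gamma>: "0 < \<gamma>" and w: "1 \<le> w" and B: "0 < B"
    and m: "is_maximizerN p \<gamma> B w N x" and j: "1 \<le> j" "j \<le> N"
  shows "0 < x j"
proof (rule ccontr)
  have x: "feasibleN B N x" using m by (simp add: is_maximizerN_def)
  assume "\<not> 0 < x j"
  then have "x j = 0" using x j by (force simp: feasibleN_def)
  have R: "0 < remaining B x N"
    by (rule maximizer_remaining_pos[OF p \<gamma> w B m])
  have "marginal \<gamma> (remaining B x k / real w) \<le> 1" if "k \<le> N" for k
    using marginal_le_iff[OF \<gamma>, of _ 0] feasibleN_remaining_nonneg[OF x that] by simp
  then have "(\<Sum>k=j..N. p * (1 - p) ^ k * marginal \<gamma> (remaining B x k / real w))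
      \<le> (\<Sum>k=j..N. p * (1 - p) ^ k)"
    using p by (intro sum_mono) (simp add: mult_left_le)
  moreover have "marginal \<gamma> (remaining B x N / real w) < 1"
    using marginal_less_iff[OF \<gamma>, of _ 0] R w by simp
  then have "(1 - p) ^ (N + 1) * marginal \<gamma> (remaining B x N / real w) < (1 - p) ^ (N + 1)"
    using p by simp
  ultimately have "0 < grad_coord p \<gamma> B w N x j"
    using sum_geometric_weights[of j N p] j \<open>x j = 0\<close> by (simp add: grad_coord_def)
  then show False
    using maximizer_grad_coord_nonpos[OF p \<gamma> w m j R] by simp
qed

(* The stationarity conditions grad_coord j = 0 for j = 1..N, rewritten with grad_coord_last and
   grad_coord_diff. *)
definition satisfies_kkt :: "real \<Rightarrow> real \<Rightarrow> real \<Rightarrow> nat \<Rightarrow> nat \<Rightarrow> (nat \<Rightarrow> real) \<Rightarrow> bool" where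
  "satisfies_kkt p \<gamma> B w N x \<longleftrightarrow>
     (\<forall>j\<in>{1..N}. 0 < x j) \<and> 0 \<le> remaining B x N \<and> x N = remaining B x N / real w \<and>
     (\<forall>j\<in>{1..<N}. marginal \<gamma> (x j)
        = p * marginal \<gamma> (remaining B x j / real w) + (1 - p) * marginal \<gamma> (x (Suc j)))"

lemma maximizer_satisfies_kkt:
  assumes p: "0 < p" "p < 1" and \<gamma>: "0 < \<gamma>" and w: "1 \<le> w" and B: "0 < B"
    and m: "is_maximizerN p \<gamma> B w N x" and N: "1 \<le> N"
  shows "satisfies_kkt p \<gamma> B w N x"
proof -
  have R: "0 < remaining B x N"
    by (rule maximizer_remaining_pos[OF p \<gamma> w B m])
  have pos: "0 < x j" if "1 \<le> j" "j \<le> N" for j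
    by (rule maximizer_pos[OF p \<gamma> w B m that])
  have grad0: "grad_coord p \<gamma> B w N x j = 0" if "1 \<le> j" "j \<le> N" for j
    using maximizer_grad_coord_nonneg[OF p \<gamma> w m that pos[OF that]]
      maximizer_grad_coord_nonpos[OF p \<gamma> w m that R] by simp
  have "marginal \<gamma> (x N) = marginal \<gamma> (remaining B x N / real w)"
    using grad0[OF N order.refl] p by (simp add: grad_coord_last)
  then have "x N = remaining B x N / real w"
    using marginal_eq_iff[OF \<gamma>] pos[OF N order.refl] R by simp
  moreover have "marginal \<gamma> (x j)
      = p * marginal \<gamma> (remaining B x j / real w) + (1 - p) * marginal \<gamma> (x (Suc j))"
    if "1 \<le> j" "j < N" for j
    using grad_coord_diff[OF that(2), of p \<gamma> B w x] grad0[of j] grad0[of "Suc j"] that p by simp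
  ultimately show ?thesis
    using pos R by (simp add: satisfies_kkt_def)
qed

lemma marginal_recurrence_mono:
  fixes a b a' b' r s :: real
  assumes \<gamma>: "0 < \<gamma>" and p: "0 \<le> p" "p < 1"
    and a: "marginal \<gamma> a = p * marginal \<gamma> r + (1 - p) * marginal \<gamma> a'"
    and b: "marginal \<gamma> b = p * marginal \<gamma> s + (1 - p) * marginal \<gamma> b'"
    and nonneg: "0 \<le> a" "0 \<le> b" "0 \<le> r" "0 \<le> s" "0 \<le> a'" "0 \<le> b'"
    and "s \<le> r"
  shows "a \<le> b \<Longrightarrow> a' \<le> b'" and "a < b \<Longrightarrow> a' < b'"
proof -
  have "p * marginal \<gamma> r \<le> p * marginal \<gamma> s"
    using marginal_le_iff[OF \<gamma> nonneg(3,4)] \<open>s \<le> r\<close> p by (simp add: mult_left_mono)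
  moreover have "(1 - p) * marginal \<gamma> b' \<le> (1 - p) * marginal \<gamma> a' \<longleftrightarrow> a' \<le> b'"
    "(1 - p) * marginal \<gamma> b' < (1 - p) * marginal \<gamma> a' \<longleftrightarrow> a' < b'"
    using marginal_le_iff[OF \<gamma> nonneg(6,5)] marginal_less_iff[OF \<gamma> nonneg(6,5)] p by simp_all
  ultimately show "a \<le> b \<Longrightarrow> a' \<le> b'" and "a < b \<Longrightarrow> a' < b'"
    using a b marginal_le_iff[OF \<gamma> nonneg(2,1)] marginal_less_iff[OF \<gamma> nonneg(2,1)] by linarith+
qed

lemma satisfies_kkt_remaining_nonneg:
  assumes "satisfies_kkt p \<gamma> B w N x" "k \<le> N"
  shows "0 \<le> remaining B x k"
proof -
  have "remaining B x N \<le> remaining B x k"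
    using assms by (intro remaining_antimono) (auto simp: satisfies_kkt_def less_imp_le)
  then show ?thesis
    using assms(1) by (simp add: satisfies_kkt_def)
qed

lemma satisfies_kkt_step:
  assumes \<gamma>: "0 < \<gamma>" and p: "0 \<le> p" "p < 1"
    and x: "satisfies_kkt p \<gamma> B w N x" and y: "satisfies_kkt p \<gamma> B w M y"
    and k: "1 \<le> k" "k < N" "k < M" and R: "remaining B y k \<le> remaining B x k"
  shows "x k \<le> y k \<Longrightarrow> x (Suc k) \<le> y (Suc k)" and "x k < y k \<Longrightarrow> x (Suc k) < y (Suc k)"
proof -
  have "marginal \<gamma> (x k) = p * marginal \<gamma> (remaining B x k / real w) + (1 - p) * marginal \<gamma> (x (Suc k))"
    "marginal \<gamma> (y k) = p * marginal \<gamma> (remaining B y k / real w) + (1 - p) * marginal \<gamma> (y (Suc k))"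
    using x y k by (simp_all add: satisfies_kkt_def)
  moreover have "0 \<le> x k" "0 \<le> y k" "0 \<le> x (Suc k)" "0 \<le> y (Suc k)"
    using x y k by (auto simp: satisfies_kkt_def less_imp_le)
  moreover have "0 \<le> remaining B x k / real w" "0 \<le> remaining B y k / real w"
    using satisfies_kkt_remaining_nonneg[OF x, of k] satisfies_kkt_remaining_nonneg[OF y, of k] k
    by simp_all
  moreover have "remaining B y k / real w \<le> remaining B x k / real w"
    using R by (simp add: divide_right_mono)
  ultimately show "x k \<le> y k \<Longrightarrow> x (Suc k) \<le> y (Suc k)" and "x k < y k \<Longrightarrow> x (Suc k) < y (Suc k)"
    using marginal_recurrence_mono[OF \<gamma> p] by blast+
qed

lemma satisfies_kkt_chain_le:
  assumes \<gamma>: "0 < \<gamma>" and p: "0 \<le> p" "p < 1"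
    and x: "satisfies_kkt p \<gamma> B w N x" and y: "satisfies_kkt p \<gamma> B w M y" and "N \<le> M"
    and "x 1 \<le> y 1" and "1 \<le> k" "k \<le> N"
  shows "x k \<le> y k \<and> remaining B y k \<le> remaining B x k"
  using \<open>1 \<le> k\<close> \<open>k \<le> N\<close>
proof (induction k rule: nat_induct_at_least)
  case base
  then show ?case using \<open>x 1 \<le> y 1\<close> by (simp add: remaining_def)
next
  case (Suc k)
  then have IH: "x k \<le> y k" "remaining B y k \<le> remaining B x k" and k: "1 \<le> k" "k < N" "k < M"
    using \<open>N \<le> M\<close> by auto
  then have "x (Suc k) \<le> y (Suc k)"
    by (intro satisfies_kkt_step(1)[OF \<gamma> p x y k])
  with IH show ?case by (simp add: remaining_Suc)
qed

lemma satisfies_kkt_chain_less: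
  assumes \<gamma>: "0 < \<gamma>" and p: "0 \<le> p" "p < 1"
    and x: "satisfies_kkt p \<gamma> B w N x" and y: "satisfies_kkt p \<gamma> B w M y" and "N \<le> M"
    and "y 1 < x 1" and "1 \<le> k" "k \<le> N"
  shows "y k < x k \<and> remaining B x k < remaining B y k"
  using \<open>1 \<le> k\<close> \<open>k \<le> N\<close>
proof (induction k rule: nat_induct_at_least)
  case base
  then show ?case using \<open>y 1 < x 1\<close> by (simp add: remaining_def)
next
  case (Suc k)
  then have IH: "y k < x k" "remaining B x k < remaining B y k" and k: "1 \<le> k" "k < M" "k < N"
    using \<open>N \<le> M\<close> by auto
  then have "y (Suc k) < x (Suc k)"
    by (intro satisfies_kkt_step(2)[OF \<gamma> p y x k]) simp_all
  with IH show ?case by (simp add: remaining_Suc)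
qed

lemma satisfies_kkt_Suc_less:
  assumes \<gamma>: "0 < \<gamma>" and p: "0 \<le> p" "p < 1" and w: "1 \<le> w"
    and x: "satisfies_kkt p \<gamma> B w N x" and y: "satisfies_kkt p \<gamma> B w (Suc N) y"
    and j: "1 \<le> j" "j \<le> N"
  shows "y j < x j"
proof -
  have "y 1 < x 1"
  proof (rule ccontr)
    assume "\<not> y 1 < x 1"
    then have le: "x N \<le> y N" "remaining B y N \<le> remaining B x N"
      using j satisfies_kkt_chain_le[OF \<gamma> p x y, of N] by auto
    have Rx: "0 \<le> remaining B x N" and Ry: "0 \<le> remaining B y N"
      using satisfies_kkt_remaining_nonneg[OF x] satisfies_kkt_remaining_nonneg[OF y] by simp_all
    (* The terminal condition of x is one more step of the recurrence, with x (Suc N) replaced by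
       remaining B x N / w. *)
    have "remaining B x N / real w \<le> y (Suc N)"
    proof (rule marginal_recurrence_mono(1)[OF \<gamma> p _ _ _ _ _ _ _ _ _ le(1)])
      show "marginal \<gamma> (x N) = p * marginal \<gamma> (remaining B x N / real w)
          + (1 - p) * marginal \<gamma> (remaining B x N / real w)"
        using x by (simp add: satisfies_kkt_def algebra_simps)
      show "marginal \<gamma> (y N) = p * marginal \<gamma> (remaining B y N / real w)
          + (1 - p) * marginal \<gamma> (y (Suc N))"
        using y j by (simp add: satisfies_kkt_def)
      show "0 \<le> x N" "0 \<le> y N" "0 \<le> y (Suc N)"
        using x y j by (auto simp: satisfies_kkt_def less_imp_le)
      show "0 \<le> remaining B x N / real w" "0 \<le> remaining B y N / real w"
        using Rx Ry by simp_all
      show "remaining B y N / real w \<le> remaining B x N / real w"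
        using le(2) by (simp add: divide_right_mono)
    qed (use Rx in simp)
    moreover have "y (Suc N) = remaining B y (Suc N) / real w"
      using y by (simp add: satisfies_kkt_def)
    moreover have "remaining B y (Suc N) < remaining B y N"
      using y by (simp add: satisfies_kkt_def remaining_Suc)
    ultimately show False
      using le(2) w by (simp add: divide_le_cancel)
  qed
  then show ?thesis
    using satisfies_kkt_chain_less[OF \<gamma> p x y _ _ j] by simp
qed

theorem lemma7:
  fixes p \<gamma> B :: real and w :: nat and \<xi> :: "nat \<Rightarrow> nat \<Rightarrow> real"
  assumes "0 < p" and "p < 1" and "0 < \<gamma>" and "0 < B" and "1 \<le> w"
    and "\<And>N. 1 \<le> N \<Longrightarrow> is_maximizerN p \<gamma> B w N (\<xi> N)"
  shows "\<forall>j N. 1 \<le> j \<and> j \<le> N \<longrightarrow> \<xi> (N + 1) j < \<xi> N j"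
proof (intro allI impI)
  fix j N :: nat
  assume j: "1 \<le> j \<and> j \<le> N"
  have "satisfies_kkt p \<gamma> B w N (\<xi> N)" "satisfies_kkt p \<gamma> B w (Suc N) (\<xi> (Suc N))"
    using j assms by (auto intro!: maximizer_satisfies_kkt)
  then show "\<xi> (N + 1) j < \<xi> N j"
    using satisfies_kkt_Suc_less[of \<gamma> p w B N] j assms by simp
qed

end
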